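(* Let $K\ge1$ and let $\mathfrak{L}\subset\mathcal{P}^2_K(X)$ be a $\mathfrak{Q}_L$-clusterable family. Then for every $\Gamma\in\mathcal{M}(\mathfrak{L})$ the Bayes optimal partition is well-defined: there is a unique $\Lambda\in\mathfrak{L}$ with $m(\Lambda)=\Gamma$, and hence a unique Bayes optimal partition $\pi_\Gamma:=\pi_\Lambda$.
   Context: $X$ is a compact metric space and all probability measures are absolutely continuous w.r.t. a base measure $\zeta$. $\mathcal{P}(X)$: regular Borel probability measures with finite $r$-th moments with Hellinger metric $\rho$; $\mathcal{P}^2_s(X)$: probability measures on $\mathcal{P}(X)$ with at most $s$ atoms; $m(\Lambda)=\sum_k\lambda_k\gamma_k$; $\mathcal{M}(\mathfrak{L})=\{m(\Lambda):\Lambda\in\mathfrak{L}\}$. For $\Lambda=\sum_{k=1}^K\lambda_k\delta_{\gamma_k}$ with $f_k$ the density of $\gamma_k$, $c_\Lambda(x)=\arg\max_k\lambda_kf_k(x)$ on $X_0=X\setminus E_0$, $E_0=\bigcup_{i\ne j}\{x:\lambda_if_i(x)=\lambda_jf_j(x)\}$; the Bayes optimal partition $\pi_\Lambda$ of $X_0$ is the partition into classes of the relation $x\sim y\iff c_\Lambda(x)=c_\Lambda(y)$. Fixed base family $\mathfrak{Q}$ with $\mathfrak{Q}_L=\mathfrak{Q}\cap\mathcal{P}^2_L(X)$, $\mathcal{M}(\mathfrak{Q}_L)$ identifiable. $T_L\Gamma$: minimizers of $\rho(Q,\Gamma)$ over $\mathcal{M}(\mathfrak{Q}_L)$ (assumed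 unique for $\Gamma\in\mathcal{M}(\mathfrak{L})$), with mixing measure $\Omega^*=M_L(T_L\Gamma)=\sum_\ell\omega^*_\ell\delta_{q^*_\ell}$, $M_L(\mathfrak{L})=\{M_L(T_Lm(\Lambda)):\Lambda\in\mathfrak{L}\}$. For $\alpha:[L]\to[K]$: $\bar\omega^*_k(\alpha)=\sum_{\ell\in\alpha^{-1}(k)}\omega^*_\ell$, $Q^*_k(\alpha)=\bar\omega^*_k(\alpha)^{-1}\sum_{\ell\in\alpha^{-1}(k)}\omega^*_\ell q^*_\ell$. $\Lambda$ is $\mathfrak{Q}_L$-regular if the projections exist uniquely for large $L$ and converge to $m(\Lambda)$, and some sequence $\alpha_L:[L]\to[K]$ ($\Lambda$-regular) has $Q^*_k(\alpha_L)\to\gamma_k$, $\bar\omega^*_k(\alpha_L)\to\lambda_k$. $\mathfrak{L}$ is $\mathfrak{Q}_L$-clusterable if all members are regular and there are functions $\chi_L:M_L(\mathfrak{L})\to\{[L]\to[K]\}$ with $\chi_L(M_L(T_Lm(\Lambda)))$ $\Lambda$-regular for every $\Lambda\in\mathfrak{L}$. *)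

theory Defs
  imports "HOL-Probability.Probability"
begin

text \<open>Mixing measures (elements of P^2(X)) are represented as pmfs on measures.\<close>

definition base_measure :: "'x::metric_space set \<Rightarrow> 'x measure \<Rightarrow> bool" where
  "base_measure X \<zeta> \<longleftrightarrow> compact X \<and> space \<zeta> = X \<and>
     sets \<zeta> = sets (restrict_space borel X) \<and> sigma_finite_measure \<zeta>"

text \<open>P(X): probability measures on X, absolutely continuous w.r.t. zeta.
(On a compact metric space finite Borel measures are regular and have finite
moments of every order.)\<close>
definition PX :: "'x measure \<Rightarrow> 'x measure set" where
  "PX \<zeta> = {\<mu>. prob_space \<mu> \<and> sets \<mu> = sets \<zeta> \<and> absolutely_continuous \<zeta> \<mu>}"

definition dens :: "'x measure \<Rightarrow> 'x measure \<Rightarrow> 'x \<Rightarrow> real" where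
  "dens \<zeta> \<mu> x = enn2real (RN_deriv \<zeta> \<mu> x)"

definition hellinger :: "'x measure \<Rightarrow> 'x measure \<Rightarrow> 'x measure \<Rightarrow> real" where
  "hellinger \<zeta> P Q =
     sqrt ((1/2) * (\<integral>x. (sqrt (dens \<zeta> P x) - sqrt (dens \<zeta> Q x))\<^sup>2 \<partial>\<zeta>))"

definition P2 :: "'x measure \<Rightarrow> nat \<Rightarrow> 'x measure pmf set" where
  "P2 \<zeta> s = {\<Lambda>. finite (set_pmf \<Lambda>) \<and> card (set_pmf \<Lambda>) \<le> s \<and> set_pmf \<Lambda> \<subseteq> PX \<zeta>}"

definition mix :: "'x measure \<Rightarrow> 'x measure pmf \<Rightarrow> 'x measure" where
  "mix \<zeta> \<Lambda> = measure_of (space \<zeta>) (sets \<zeta>)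
     (\<lambda>A. \<Sum>\<mu>\<in>set_pmf \<Lambda>. ennreal (pmf \<Lambda> \<mu>) * emeasure \<mu> A)"

definition QL :: "'x measure \<Rightarrow> 'x measure pmf set \<Rightarrow> nat \<Rightarrow> 'x measure pmf set" where
  "QL \<zeta> \<Q> L = \<Q> \<inter> P2 \<zeta> L"

definition minimizers :: "'x measure \<Rightarrow> 'x measure pmf set \<Rightarrow> nat \<Rightarrow> 'x measure \<Rightarrow> 'x measure set" where
  "minimizers \<zeta> \<Q> L \<Gamma> = {Q \<in> mix \<zeta> ` QL \<zeta> \<Q> L.
       \<forall>Q' \<in> mix \<zeta> ` QL \<zeta> \<Q> L. hellinger \<zeta> Q \<Gamma> \<le> hellinger \<zeta> Q' \<Gamma>}"

text \<open>T_L Gamma (meaningful when the minimizer is unique).\<close>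
definition TL :: "'x measure \<Rightarrow> 'x measure pmf set \<Rightarrow> nat \<Rightarrow> 'x measure \<Rightarrow> 'x measure" where
  "TL \<zeta> \<Q> L \<Gamma> = (THE Q. Q \<in> minimizers \<zeta> \<Q> L \<Gamma>)"

definition Mproj :: "'x measure \<Rightarrow> 'x measure pmf set \<Rightarrow> nat \<Rightarrow> 'x measure \<Rightarrow> 'x measure pmf" where
  "Mproj \<zeta> \<Q> L Q = (THE \<Omega>. \<Omega> \<in> QL \<zeta> \<Q> L \<and> mix \<zeta> \<Omega> = Q)"

text \<open>A labelled representation of a mixing measure over the index set [n]:
 Lambda = sum_(k<n) w_k delta_(g_k).\<close>
definition labels :: "'x measure \<Rightarrow> nat \<Rightarrow> 'x measure pmf \<Rightarrow> (nat \<Rightarrow> real) \<Rightarrow> (nat \<Rightarrow> 'x measure) \<Rightarrow> bool" where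
  "labels \<zeta> n \<Lambda> w g \<longleftrightarrow> (\<forall>k<n. w k \<ge> 0 \<and> g k \<in> PX \<zeta>) \<and>
     (\<forall>\<mu>. pmf \<Lambda> \<mu> = (\<Sum>k\<in>{k. k < n \<and> g k = \<mu>}. w k))"

text \<open>A clustering datum at level L: a labelling (omega*, q*) of Omega* over [L]
together with a map alpha : [L] -> [K].\<close>
type_synonym 'x clustering = "(nat \<Rightarrow> real) \<times> (nat \<Rightarrow> 'x measure) \<times> (nat \<Rightarrow> nat)"

definition wbar :: "'x clustering \<Rightarrow> nat \<Rightarrow> nat \<Rightarrow> real" where
  "wbar c L k = (case c of (\<omega>, q, \<alpha>) \<Rightarrow> \<Sum>j\<in>{j. j < L \<and> \<alpha> j = k}. \<omega> j)"

definition Qstar :: "'x measure \<Rightarrow> 'x clustering \<Rightarrow> nat \<Rightarrow> nat \<Rightarrow> 'x measure" where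
  "Qstar \<zeta> c L k = (case c of (\<omega>, q, \<alpha>) \<Rightarrow>
     measure_of (space \<zeta>) (sets \<zeta>)
       (\<lambda>A. \<Sum>j\<in>{j. j < L \<and> \<alpha> j = k}. ennreal (\<omega> j / wbar c L k) * emeasure (q j) A))"

definition OmegaStar :: "'x measure \<Rightarrow> 'x measure pmf set \<Rightarrow> nat \<Rightarrow> 'x measure pmf \<Rightarrow> 'x measure pmf" where
  "OmegaStar \<zeta> \<Q> L \<Lambda> = Mproj \<zeta> \<Q> L (TL \<zeta> \<Q> L (mix \<zeta> \<Lambda>))"

definition regular_seq :: "'x measure \<Rightarrow> 'x measure pmf set \<Rightarrow> nat \<Rightarrow> 'x measure pmf \<Rightarrow> (nat \<Rightarrow> 'x clustering) \<Rightarrow> bool" where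
  "regular_seq \<zeta> \<Q> K \<Lambda> c \<longleftrightarrow>
     (\<exists>wt \<gamma>. labels \<zeta> K \<Lambda> wt \<gamma> \<and>
        (\<forall>\<^sub>F L in sequentially. (case c L of (\<omega>, q, \<alpha>) \<Rightarrow>
            labels \<zeta> L (OmegaStar \<zeta> \<Q> L \<Lambda>) \<omega> q \<and> (\<forall>j<L. \<alpha> j < K))) \<and>
        (\<forall>k<K. ((\<lambda>L. hellinger \<zeta> (Qstar \<zeta> (c L) L k) (\<gamma> k)) \<longlonglongrightarrow> 0) \<and>
               ((\<lambda>L. wbar (c L) L k) \<longlonglongrightarrow> wt k)))"

definition regular :: "'x measure \<Rightarrow> 'x measure pmf set \<Rightarrow> nat \<Rightarrow> 'x measure pmf \<Rightarrow> bool" where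
  "regular \<zeta> \<Q> K \<Lambda> \<longleftrightarrow>
     (\<forall>\<^sub>F L in sequentially. \<exists>!Q. Q \<in> minimizers \<zeta> \<Q> L (mix \<zeta> \<Lambda>)) \<and>
     ((\<lambda>L. hellinger \<zeta> (TL \<zeta> \<Q> L (mix \<zeta> \<Lambda>)) (mix \<zeta> \<Lambda>)) \<longlonglongrightarrow> 0) \<and>
     (\<exists>c. regular_seq \<zeta> \<Q> K \<Lambda> c)"

definition clusterable :: "'x measure \<Rightarrow> 'x measure pmf set \<Rightarrow> nat \<Rightarrow> 'x measure pmf set \<Rightarrow> bool" where
  "clusterable \<zeta> \<Q> K \<LL> \<longleftrightarrow> (\<forall>\<Lambda>\<in>\<LL>. regular \<zeta> \<Q> K \<Lambda>) \<and>
     (\<exists>(chi::nat \<Rightarrow> 'x measure pmf \<Rightarrow> 'x clustering).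
        \<forall>\<Lambda>\<in>\<LL>. regular_seq \<zeta> \<Q> K \<Lambda> (\<lambda>L. chi L (OmegaStar \<zeta> \<Q> L \<Lambda>)))"

text \<open>Bayes optimal partition pi_Lambda (atoms of Lambda play the role of the labels k).\<close>
definition E0 :: "'x measure \<Rightarrow> 'x measure pmf \<Rightarrow> 'x set" where
  "E0 \<zeta> \<Lambda> = {x \<in> space \<zeta>. \<exists>\<mu>\<in>set_pmf \<Lambda>. \<exists>\<nu>\<in>set_pmf \<Lambda>. \<mu> \<noteq> \<nu> \<and>
       pmf \<Lambda> \<mu> * dens \<zeta> \<mu> x = pmf \<Lambda> \<nu> * dens \<zeta> \<nu> x}"

definition bayes_class :: "'x measure \<Rightarrow> 'x measure pmf \<Rightarrow> 'x \<Rightarrow> 'x measure" where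
  "bayes_class \<zeta> \<Lambda> x = (THE \<mu>. \<mu> \<in> set_pmf \<Lambda> \<and>
       (\<forall>\<nu>\<in>set_pmf \<Lambda>. pmf \<Lambda> \<nu> * dens \<zeta> \<nu> x \<le> pmf \<Lambda> \<mu> * dens \<zeta> \<mu> x))"

definition bayes_partition :: "'x measure \<Rightarrow> 'x measure pmf \<Rightarrow> 'x set set" where
  "bayes_partition \<zeta> \<Lambda> = (let X0 = space \<zeta> - E0 \<zeta> \<Lambda> in
     X0 // {(x, y). x \<in> X0 \<and> y \<in> X0 \<and> bayes_class \<zeta> \<Lambda> x = bayes_class \<zeta> \<Lambda> y})"

end

theory Submission imports Defs begin

text \<open>The clustering datum \<open>\<chi>\<^sub>L(\<Omega>\<^sup>*)\<close> depends on \<open>\<Lambda>\<close> only through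
\<open>\<Omega>\<^sup>* = M\<^sub>L(T\<^sub>L m(\<Lambda>))\<close>, hence only through the mixture \<open>m(\<Lambda>)\<close>.  Two members of a
clusterable family with the same mixture therefore share one sequence of clusterings, and
both are regular along it: their weights are the limits of the same cluster weights and their
atoms the Hellinger limits of the same cluster mixtures.  Limits are unique (for Hellinger
limits through the quasi-triangle inequality \<open>\<rho>(P,R)\<^sup>2 \<le> 2\<rho>(Q,P)\<^sup>2 + 2\<rho>(Q,R)\<^sup>2\<close>), so the
two mixing measures coincide, and so do their Bayes optimal partitions.\<close>

definition finite_dominated :: "'x measure \<Rightarrow> 'x measure \<Rightarrow> bool" where
  "finite_dominated \<zeta> N \<longleftrightarrow> finite_measure N \<and> sets N = sets \<zeta> \<and> absolutely_continuous \<zeta> N"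

lemma PX_imp_finite_dominated: "N \<in> PX \<zeta> \<Longrightarrow> finite_dominated \<zeta> N"
  by (auto simp: PX_def finite_dominated_def intro: prob_space.finite_measure)

lemma dens_nonneg: "0 \<le> dens \<zeta> N x"
  unfolding dens_def by simp

lemma borel_measurable_dens[measurable]: "dens \<zeta> N \<in> borel_measurable \<zeta>"
  unfolding dens_def by measurable

lemma integrable_dens:
  assumes "sigma_finite_measure \<zeta>" and "finite_dominated \<zeta> N"
  shows "integrable \<zeta> (dens \<zeta> N)"
proof -
  interpret sigma_finite_measure \<zeta> by fact
  interpret N: finite_measure N using assms(2) by (simp add: finite_dominated_def)
  have "integrable \<zeta> (\<lambda>x. enn2real (RN_deriv \<zeta> N x) * 1)"
    using RN_deriv_integrable[OF N.sigma_finite_measure_axioms, of "\<lambda>_. 1"] assms(2)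
    by (simp add: finite_dominated_def)
  then show ?thesis unfolding dens_def by simp
qed

lemma density_dens:
  assumes "sigma_finite_measure \<zeta>" and "finite_dominated \<zeta> N"
  shows "N = density \<zeta> (\<lambda>x. ennreal (dens \<zeta> N x))"
proof -
  interpret sigma_finite_measure \<zeta> by fact
  interpret N: finite_measure N using assms(2) by (simp add: finite_dominated_def)
  have ac: "absolutely_continuous \<zeta> N" and sets: "sets N = sets \<zeta>"
    using assms(2) by (simp_all add: finite_dominated_def)
  have "N = density \<zeta> (RN_deriv \<zeta> N)" using density_RN_deriv[OF ac sets] by simp
  also have "\<dots> = density \<zeta> (\<lambda>x. ennreal (dens \<zeta> N x))"
  proof (rule density_cong)
    from RN_deriv_finite[OF N.sigma_finite_measure_axioms ac sets]
    show "AE x in \<zeta>. RN_deriv \<zeta> N x = ennreal (dens \<zeta> N x)"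
      unfolding dens_def by eventually_elim (auto simp: less_top)
  qed (auto simp: dens_def)
  finally show ?thesis .
qed

lemma integrable_sqrt_dens_diff_sq:
  assumes "integrable \<zeta> (dens \<zeta> P)" and "integrable \<zeta> (dens \<zeta> Q)"
  shows "integrable \<zeta> (\<lambda>x. (sqrt (dens \<zeta> P x) - sqrt (dens \<zeta> Q x))\<^sup>2)"
proof (rule Bochner_Integration.integrable_bound[OF Bochner_Integration.integrable_add[OF assms]])
  show "AE x in \<zeta>. norm ((sqrt (dens \<zeta> P x) - sqrt (dens \<zeta> Q x))\<^sup>2) \<le> norm (dens \<zeta> P x + dens \<zeta> Q x)"
  proof (rule AE_I2)
    fix x
    have nonneg: "0 \<le> dens \<zeta> P x" "0 \<le> dens \<zeta> Q x" by (rule dens_nonneg)+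
    then have "(sqrt (dens \<zeta> P x) - sqrt (dens \<zeta> Q x))\<^sup>2
        = dens \<zeta> P x + dens \<zeta> Q x - 2 * sqrt (dens \<zeta> P x) * sqrt (dens \<zeta> Q x)"
      by (simp add: power2_diff)
    then have "(sqrt (dens \<zeta> P x) - sqrt (dens \<zeta> Q x))\<^sup>2 \<le> dens \<zeta> P x + dens \<zeta> Q x"
      using nonneg by simp
    then show "norm ((sqrt (dens \<zeta> P x) - sqrt (dens \<zeta> Q x))\<^sup>2) \<le> norm (dens \<zeta> P x + dens \<zeta> Q x)"
      using nonneg by simp
  qed
qed measurable

lemma integral_sqrt_dens_diff_sq:
  "(\<integral>x. (sqrt (dens \<zeta> P x) - sqrt (dens \<zeta> Q x))\<^sup>2 \<partial>\<zeta>) = 2 * (hellinger \<zeta> P Q)\<^sup>2"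
proof -
  have "0 \<le> (\<integral>x. (sqrt (dens \<zeta> P x) - sqrt (dens \<zeta> Q x))\<^sup>2 \<partial>\<zeta>)"
    by (rule integral_nonneg_AE) simp
  then show ?thesis unfolding hellinger_def by simp
qed

lemma hellinger_sq_le:
  assumes sf: "sigma_finite_measure \<zeta>"
    and "finite_dominated \<zeta> P" "finite_dominated \<zeta> Q" "finite_dominated \<zeta> R"
  shows "(hellinger \<zeta> P R)\<^sup>2 \<le> 2 * (hellinger \<zeta> Q P)\<^sup>2 + 2 * (hellinger \<zeta> Q R)\<^sup>2"
proof -
  have iP: "integrable \<zeta> (dens \<zeta> P)" and iQ: "integrable \<zeta> (dens \<zeta> Q)"
    and iR: "integrable \<zeta> (dens \<zeta> R)"
    using integrable_dens[OF sf] assms(2-4) by blast+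
  let ?p = "\<lambda>x. sqrt (dens \<zeta> P x)" and ?q = "\<lambda>x. sqrt (dens \<zeta> Q x)"
    and ?r = "\<lambda>x. sqrt (dens \<zeta> R x)"
  have pointwise: "(b - c)\<^sup>2 \<le> 2 * (a - b)\<^sup>2 + 2 * (a - c)\<^sup>2" for a b c :: real
    using zero_le_power2[of "2 * a - b - c"] by (simp add: power2_eq_square algebra_simps)
  have "2 * (hellinger \<zeta> P R)\<^sup>2 = (\<integral>x. (?p x - ?r x)\<^sup>2 \<partial>\<zeta>)"
    by (simp add: integral_sqrt_dens_diff_sq)
  also have "\<dots> \<le> (\<integral>x. 2 * (?q x - ?p x)\<^sup>2 + 2 * (?q x - ?r x)\<^sup>2 \<partial>\<zeta>)"
    using integrable_sqrt_dens_diff_sq[OF iP iR] integrable_sqrt_dens_diff_sq[OF iQ iP]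
      integrable_sqrt_dens_diff_sq[OF iQ iR]
    by (intro integral_mono pointwise) auto
  also have "\<dots> = 2 * (\<integral>x. (?q x - ?p x)\<^sup>2 \<partial>\<zeta>) + 2 * (\<integral>x. (?q x - ?r x)\<^sup>2 \<partial>\<zeta>)"
    using integrable_sqrt_dens_diff_sq[OF iQ iP] integrable_sqrt_dens_diff_sq[OF iQ iR] by simp
  also have "\<dots> = 2 * (2 * (hellinger \<zeta> Q P)\<^sup>2 + 2 * (hellinger \<zeta> Q R)\<^sup>2)"
    by (simp add: integral_sqrt_dens_diff_sq)
  finally show ?thesis by simp
qed

lemma hellinger_eq_0_imp_eq:
  assumes sf: "sigma_finite_measure \<zeta>"
    and P: "finite_dominated \<zeta> P" and Q: "finite_dominated \<zeta> Q" and "hellinger \<zeta> P Q = 0"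
  shows "P = Q"
proof -
  have int: "integrable \<zeta> (\<lambda>x. (sqrt (dens \<zeta> P x) - sqrt (dens \<zeta> Q x))\<^sup>2)"
    using integrable_sqrt_dens_diff_sq integrable_dens[OF sf] P Q by blast
  have "(\<integral>x. (sqrt (dens \<zeta> P x) - sqrt (dens \<zeta> Q x))\<^sup>2 \<partial>\<zeta>) = 0"
    using assms(4) by (simp add: integral_sqrt_dens_diff_sq)
  then have "AE x in \<zeta>. (sqrt (dens \<zeta> P x) - sqrt (dens \<zeta> Q x))\<^sup>2 = 0"
    using integral_nonneg_eq_0_iff_AE[OF int] by simp
  then have "AE x in \<zeta>. ennreal (dens \<zeta> P x) = ennreal (dens \<zeta> Q x)"
    by eventually_elim simp
  then have "density \<zeta> (\<lambda>x. ennreal (dens \<zeta> P x)) = density \<zeta> (\<lambda>x. ennreal (dens \<zeta> Q x))"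
    by (intro density_cong) auto
  then show ?thesis using density_dens[OF sf P] density_dens[OF sf Q] by simp
qed

lemma hellinger_limit_unique:
  assumes sf: "sigma_finite_measure \<zeta>"
    and P: "finite_dominated \<zeta> P" and R: "finite_dominated \<zeta> R"
    and Q: "\<forall>\<^sub>F L in sequentially. finite_dominated \<zeta> (Q L)"
    and QP: "(\<lambda>L. hellinger \<zeta> (Q L) P) \<longlonglongrightarrow> 0"
    and QR: "(\<lambda>L. hellinger \<zeta> (Q L) R) \<longlonglongrightarrow> 0"
  shows "P = R"
proof -
  have bound: "\<forall>\<^sub>F L in sequentially.
      (hellinger \<zeta> P R)\<^sup>2 \<le> 2 * (hellinger \<zeta> (Q L) P)\<^sup>2 + 2 * (hellinger \<zeta> (Q L) R)\<^sup>2"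
    using Q by eventually_elim (rule hellinger_sq_le[OF sf P _ R])
  have "(\<lambda>L. (hellinger \<zeta> (Q L) P)\<^sup>2) \<longlonglongrightarrow> 0" "(\<lambda>L. (hellinger \<zeta> (Q L) R)\<^sup>2) \<longlonglongrightarrow> 0"
    using tendsto_power[OF QP, of 2] tendsto_power[OF QR, of 2] by simp_all
  then have "(\<lambda>L. 2 * (hellinger \<zeta> (Q L) P)\<^sup>2 + 2 * (hellinger \<zeta> (Q L) R)\<^sup>2) \<longlonglongrightarrow> 0"
    by (intro tendsto_add_zero tendsto_mult_right_zero)
  then have "(hellinger \<zeta> P R)\<^sup>2 \<le> 0"
    by (rule tendsto_le[OF trivial_limit_sequentially _ tendsto_const bound])
  then have "hellinger \<zeta> P R = 0" by simp
  then show ?thesis by (rule hellinger_eq_0_imp_eq[OF sf P R])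
qed

lemma finite_dominated_weighted_sum:
  assumes J: "finite J" and q: "\<And>j. j \<in> J \<Longrightarrow> finite_dominated \<zeta> (q j)"
  shows "finite_dominated \<zeta>
    (measure_of (space \<zeta>) (sets \<zeta>) (\<lambda>A. \<Sum>j\<in>J. ennreal (c j) * emeasure (q j) A))"
    (is "finite_dominated \<zeta> ?M")
proof -
  let ?\<mu> = "\<lambda>A. \<Sum>j\<in>J. ennreal (c j) * emeasure (q j) A"
  have sets_q: "sets (q j) = sets \<zeta>" and fin_q: "finite_measure (q j)"
    and ac_q: "absolutely_continuous \<zeta> (q j)" if "j \<in> J" for j
    using q[OF that] by (simp_all add: finite_dominated_def)
  have "countably_additive (sets \<zeta>) ?\<mu>"
    unfolding countably_additive_def
  proof (intro allI impI)
    fix A :: "nat \<Rightarrow> _"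
    assume A: "range A \<subseteq> sets \<zeta>" "disjoint_family A" "\<Union> (range A) \<in> sets \<zeta>"
    have additive: "(\<Sum>i. emeasure (q j) (A i)) = emeasure (q j) (\<Union> (range A))" if "j \<in> J" for j
      using A suminf_emeasure[of A "q j"] sets_q[OF that] by simp
    have "(\<Sum>i. ?\<mu> (A i)) = (\<Sum>j\<in>J. \<Sum>i. ennreal (c j) * emeasure (q j) (A i))"
      by (rule suminf_sum) simp
    also have "\<dots> = ?\<mu> (\<Union> (range A))"
      using additive by (simp add: ennreal_suminf_cmult)
    finally show "(\<Sum>i. ?\<mu> (A i)) = ?\<mu> (\<Union> (range A))" .
  qed
  then have emeasure_M: "emeasure ?M A = ?\<mu> A" if "A \<in> sets \<zeta>" for A
    using that by (intro emeasure_measure_of_sigma sets.sigma_algebra_axioms) (auto simp: positive_def)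
  have "emeasure (q j) (space \<zeta>) < \<infinity>" if "j \<in> J" for j
    using finite_measure.emeasure_finite[OF fin_q[OF that]] by (simp add: less_top)
  then have "emeasure ?M (space ?M) < \<infinity>"
    using J by (simp add: emeasure_M ennreal_mult_less_top ennreal_sum_less_top)
  moreover have "absolutely_continuous \<zeta> ?M"
    unfolding absolutely_continuous_def
  proof
    fix A assume A: "A \<in> null_sets \<zeta>"
    then have "emeasure (q j) A = 0" if "j \<in> J" for j
      using ac_q[OF that] sets_q[OF that] by (auto simp: absolutely_continuous_def null_sets_def)
    then have "emeasure ?M A = 0" using null_setsD2[OF A] by (simp add: emeasure_M)
    then show "A \<in> null_sets ?M" using null_setsD2[OF A] by (simp add: null_sets_def)
  qed
  ultimately show ?thesis by (auto simp: finite_dominated_def less_top intro: finite_measureI)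
qed

lemma finite_dominated_Qstar:
  assumes "labels \<zeta> L \<Omega> \<omega> q"
  shows "finite_dominated \<zeta> (Qstar \<zeta> (\<omega>, q, \<alpha>) L k)"
  unfolding Qstar_def prod.case
  using assms by (intro finite_dominated_weighted_sum PX_imp_finite_dominated) (auto simp: labels_def)

lemma labels_determine_pmf:
  assumes "labels \<zeta> K \<Lambda>1 w1 \<gamma>1" and "labels \<zeta> K \<Lambda>2 w2 \<gamma>2"
    and "\<And>k. k < K \<Longrightarrow> w1 k = w2 k \<and> \<gamma>1 k = \<gamma>2 k"
  shows "\<Lambda>1 = \<Lambda>2"
proof (rule pmf_eqI)
  fix \<mu>
  have "{k. k < K \<and> \<gamma>1 k = \<mu>} = {k. k < K \<and> \<gamma>2 k = \<mu>}" using assms(3) by auto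
  then show "pmf \<Lambda>1 \<mu> = pmf \<Lambda>2 \<mu>"
    using assms unfolding labels_def by (auto intro!: sum.cong)
qed

lemma regular_seq_unique:
  assumes sf: "sigma_finite_measure \<zeta>"
    and reg1: "regular_seq \<zeta> \<Q> K \<Lambda>1 c" and reg2: "regular_seq \<zeta> \<Q> K \<Lambda>2 c"
  shows "\<Lambda>1 = \<Lambda>2"
proof -
  obtain w1 \<gamma>1 where lab1: "labels \<zeta> K \<Lambda>1 w1 \<gamma>1"
    and labels_c: "\<forall>\<^sub>F L in sequentially. case c L of (\<omega>, q, \<alpha>) \<Rightarrow>
        labels \<zeta> L (OmegaStar \<zeta> \<Q> L \<Lambda>1) \<omega> q \<and> (\<forall>j<L. \<alpha> j < K)"
    and lim1: "\<forall>k<K. ((\<lambda>L. hellinger \<zeta> (Qstar \<zeta> (c L) L k) (\<gamma>1 k)) \<longlonglongrightarrow> 0) \<and>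
        ((\<lambda>L. wbar (c L) L k) \<longlonglongrightarrow> w1 k)"
    using reg1 unfolding regular_seq_def by blast
  obtain w2 \<gamma>2 where lab2: "labels \<zeta> K \<Lambda>2 w2 \<gamma>2"
    and lim2: "\<forall>k<K. ((\<lambda>L. hellinger \<zeta> (Qstar \<zeta> (c L) L k) (\<gamma>2 k)) \<longlonglongrightarrow> 0) \<and>
        ((\<lambda>L. wbar (c L) L k) \<longlonglongrightarrow> w2 k)"
    using reg2 unfolding regular_seq_def by blast
  have "\<gamma>1 k = \<gamma>2 k" if k: "k < K" for k
  proof (rule hellinger_limit_unique[OF sf])
    show "finite_dominated \<zeta> (\<gamma>1 k)" "finite_dominated \<zeta> (\<gamma>2 k)"
      using lab1 lab2 k by (auto simp: labels_def intro: PX_imp_finite_dominated)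
    show "\<forall>\<^sub>F L in sequentially. finite_dominated \<zeta> (Qstar \<zeta> (c L) L k)"
      using labels_c by eventually_elim (auto split: prod.splits intro: finite_dominated_Qstar)
  qed (use lim1 lim2 k in auto)
  moreover have "w1 k = w2 k" if "k < K" for k
    using lim1 lim2 that LIMSEQ_unique by blast
  ultimately show ?thesis using labels_determine_pmf[OF lab1 lab2] by blast
qed

lemma clusterable_inj_on_mix:
  assumes "sigma_finite_measure \<zeta>" and "clusterable \<zeta> \<Q> K \<LL>"
  shows "inj_on (mix \<zeta>) \<LL>"
proof (rule inj_onI)
  obtain chi where chi: "\<forall>\<Lambda>\<in>\<LL>. regular_seq \<zeta> \<Q> K \<Lambda> (\<lambda>L. chi L (OmegaStar \<zeta> \<Q> L \<Lambda>))"
    using assms(2) unfolding clusterable_def by blast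
  fix \<Lambda>1 \<Lambda>2 assume "\<Lambda>1 \<in> \<LL>" "\<Lambda>2 \<in> \<LL>" and mix_eq: "mix \<zeta> \<Lambda>1 = mix \<zeta> \<Lambda>2"
  have same_OmegaStar: "OmegaStar \<zeta> \<Q> L \<Lambda>2 = OmegaStar \<zeta> \<Q> L \<Lambda>1" for L
    unfolding OmegaStar_def mix_eq ..
  have "regular_seq \<zeta> \<Q> K \<Lambda>1 (\<lambda>L. chi L (OmegaStar \<zeta> \<Q> L \<Lambda>1))"
    using chi \<open>\<Lambda>1 \<in> \<LL>\<close> by blast
  moreover have "regular_seq \<zeta> \<Q> K \<Lambda>2 (\<lambda>L. chi L (OmegaStar \<zeta> \<Q> L \<Lambda>1))"
    using chi[rule_format, OF \<open>\<Lambda>2 \<in> \<LL>\<close>] by (simp add: same_OmegaStar)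
  ultimately show "\<Lambda>1 = \<Lambda>2" by (rule regular_seq_unique[OF assms(1)])
qed

theorem proposition3:
  fixes X :: "'x::metric_space set" and \<zeta> :: "'x measure"
    and \<Q> :: "'x measure pmf set" and \<LL> :: "'x measure pmf set" and K :: nat
  assumes "base_measure X \<zeta>"
    and "K \<ge> 1"
    and "\<LL> \<subseteq> P2 \<zeta> K"
    and "\<forall>L. inj_on (mix \<zeta>) (QL \<zeta> \<Q> L)"
    and "clusterable \<zeta> \<Q> K \<LL>"
  shows "\<forall>\<Gamma> \<in> mix \<zeta> ` \<LL>. (\<exists>!\<Lambda>. \<Lambda> \<in> \<LL> \<and> mix \<zeta> \<Lambda> = \<Gamma>) \<and>
           (\<exists>!\<pi>. \<exists>\<Lambda>\<in>\<LL>. mix \<zeta> \<Lambda> = \<Gamma> \<and> \<pi> = bayes_partition \<zeta> \<Lambda>)"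
proof
  fix \<Gamma> assume "\<Gamma> \<in> mix \<zeta> ` \<LL>"
  then obtain \<Lambda> where \<Lambda>: "\<Lambda> \<in> \<LL>" "mix \<zeta> \<Lambda> = \<Gamma>" by blast
  have "sigma_finite_measure \<zeta>" using assms(1) by (simp add: base_measure_def)
  then have "inj_on (mix \<zeta>) \<LL>" using assms(5) by (rule clusterable_inj_on_mix)
  then have "\<Lambda>' = \<Lambda>" if "\<Lambda>' \<in> \<LL>" "mix \<zeta> \<Lambda>' = \<Gamma>" for \<Lambda>'
    using \<Lambda> that by (auto dest: inj_onD)
  then show "(\<exists>!\<Lambda>. \<Lambda> \<in> \<LL> \<and> mix \<zeta> \<Lambda> = \<Gamma>) \<and>
      (\<exists>!\<pi>. \<exists>\<Lambda>\<in>\<LL>. mix \<zeta> \<Lambda> = \<Gamma> \<and> \<pi> = bayes_partition \<zeta> \<Lambda>)"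
    using \<Lambda> by blast
qed

end
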